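(* Let $(\mathbf Z_n,\mathbf A_{n\times n})$ be generated from the stochastic block model with parameters $(\pi,\rho_nS)$, with $n\rho_n\to\infty$. Then for all $\delta>0$, \[ \sup_{a,b\in[k]}\bigl|\hat P_{ab}(\mathbf A_{n\times n}\mid\mathbf Z_n)-\rho_nS_{ab}\bigr|<\frac{\sqrt{\delta\rho_n\log n}}{n} \] with probability converging to $1$ as $n\to\infty$. Moreover, for all $\alpha>0$ and all $\delta<s_{\min}/2$, if $n\rho_n>\frac{4s_{\max}}{\alpha^2\delta^2}$, then \[ \sup_{a,b\in[k]}\ \sup_{\mathbf e_n\in\mathcal F(n,\alpha)}\bigl|\hat P_{ab}(\mathbf A_{n\times n}\mid\mathbf e_n)-[P_{R(\mathbf e_n,\mathbf Z_n)}]_{ab}\bigr|<\delta\rho_n \] eventually almost surely as $n\to\infty$.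
   Context: SBM with parameters $(\pi,\rho_nS)$: $k\ge2$ fixed; $\pi$ a probability vector on $[k]$ with all $\pi_a>0$; $S$ a fixed symmetric $k\times k$ matrix with strictly positive entries and no two identical columns, $s_{\min},s_{\max}$ its minimal and maximal entries; $\rho_n\to0$; $P=\rho_nS$. $\mathbf Z_n$ i.i.d. with law $\pi$; given $\mathbf Z_n=\mathbf z_n$, $\mathbf A_{n\times n}$ symmetric, zero diagonal, $A_{ij}$ ($i<j$) independent Bernoulli$(P_{z_iz_j})$. For $\mathbf e_n\in[k]^n$: $n_a(\mathbf e_n)=\#\{i:e_i=a\}$; $n_{ab}=n_an_b$ ($a\ne b$), $n_{aa}=n_a(n_a-1)$; $o_{ab}(\mathbf e_n)=\sum_{i,j}\mathbf 1\{e_i=a,e_j=b\}A_{ij}$; $\hat P_{ab}(\mathbf A_{n\times n}\mid\mathbf e_n)=o_{ab}(\mathbf e_n)/n_{ab}(\mathbf e_n)$. $\mathcal F(n,\alpha)=\{\mathbf e_n:n_a(\mathbf e_n)\ge\alpha n\ \forall a\}$. Confusion matrix: $R_{ab}(\mathbf e_n,\mathbf z_n)=\frac1n\sum_i\mathbf 1\{e_i=a,z_i=b\}$. For a nonnegative $k\times k$ matrix $R$, with $\mathbf 1$ the all-ones vector and $\delta_{ab}=\mathbf 1\{a=b\}$: $[P_R]_{ab}=\dfrac{[RPR^T]_{ab}-\delta_{ab}\sum_{i=1}^kP_{ii}R_{ai}/n}{[R\mathbf 1]_a([R\mathbf 1]_b-\delta_{ab}/n)}$; equivalently $n_{ab}(\mathbf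 e_n)[P_{R(\mathbf e_n,\mathbf z_n)}]_{ab}=\mathbb E(o_{ab}(\mathbf e_n)\mid\mathbf Z_n=\mathbf z_n)$. *)

theory Defs
  imports "HOL-Probability.Probability"
begin

text \<open>Nodes are 0..n-1, communities are 0..k-1. Matrices are functions nat => nat => real.\<close>

definition s_min :: "nat \<Rightarrow> (nat \<Rightarrow> nat \<Rightarrow> real) \<Rightarrow> real" where
  "s_min k S = Min {S a b | a b. a < k \<and> b < k}"

definition s_max :: "nat \<Rightarrow> (nat \<Rightarrow> nat \<Rightarrow> real) \<Rightarrow> real" where
  "s_max k S = Max {S a b | a b. a < k \<and> b < k}"

definition comm_pmf :: "nat \<Rightarrow> (nat \<Rightarrow> real) \<Rightarrow> nat pmf" where
  "comm_pmf k \<pi> = embed_pmf (\<lambda>a. if a < k then \<pi> a else 0)"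

definition symm_adj :: "(nat \<times> nat \<Rightarrow> bool) \<Rightarrow> nat \<Rightarrow> nat \<Rightarrow> bool" where
  "symm_adj B i j = (if i < j then B (i, j) else if j < i then B (j, i) else False)"

definition sbm_pmf ::
  "nat \<Rightarrow> (nat \<Rightarrow> real) \<Rightarrow> (nat \<Rightarrow> nat \<Rightarrow> real) \<Rightarrow> (nat \<Rightarrow> real) \<Rightarrow> nat
     \<Rightarrow> ((nat \<Rightarrow> nat) \<times> (nat \<Rightarrow> nat \<Rightarrow> bool)) pmf" where
  "sbm_pmf k \<pi> S \<rho> n =
     bind_pmf (Pi_pmf {..<n} 0 (\<lambda>_. comm_pmf k \<pi>))
       (\<lambda>z. map_pmf (\<lambda>B. (z, symm_adj B))
              (Pi_pmf {(i, j). i < j \<and> j < n} False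
                 (\<lambda>(i, j). bernoulli_pmf (\<rho> n * S (z i) (z j)))))"

definition n_a :: "nat \<Rightarrow> (nat \<Rightarrow> nat) \<Rightarrow> nat \<Rightarrow> nat" where
  "n_a n e a = card {i. i < n \<and> e i = a}"

definition n_ab :: "nat \<Rightarrow> (nat \<Rightarrow> nat) \<Rightarrow> nat \<Rightarrow> nat \<Rightarrow> real" where
  "n_ab n e a b = (if a \<noteq> b then real (n_a n e a) * real (n_a n e b)
                   else real (n_a n e a) * (real (n_a n e a) - 1))"

definition o_ab :: "nat \<Rightarrow> (nat \<Rightarrow> nat \<Rightarrow> bool) \<Rightarrow> (nat \<Rightarrow> nat) \<Rightarrow> nat \<Rightarrow> nat \<Rightarrow> real" where
  "o_ab n A e a b = (\<Sum>i<n. \<Sum>j<n. if e i = a \<and> e j = b \<and> A i j then 1 else 0)"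

definition P_hat :: "nat \<Rightarrow> (nat \<Rightarrow> nat \<Rightarrow> bool) \<Rightarrow> (nat \<Rightarrow> nat) \<Rightarrow> nat \<Rightarrow> nat \<Rightarrow> real" where
  "P_hat n A e a b = o_ab n A e a b / n_ab n e a b"

definition F_set :: "nat \<Rightarrow> nat \<Rightarrow> real \<Rightarrow> (nat \<Rightarrow> nat) set" where
  "F_set k n \<alpha> = {e \<in> {..<n} \<rightarrow>\<^sub>E {..<k}. \<forall>a<k. real (n_a n e a) \<ge> \<alpha> * real n}"

definition confusion :: "nat \<Rightarrow> (nat \<Rightarrow> nat) \<Rightarrow> (nat \<Rightarrow> nat) \<Rightarrow> nat \<Rightarrow> nat \<Rightarrow> real" where
  "confusion n e z a b = real (card {i. i < n \<and> e i = a \<and> z i = b}) / real n"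

definition P_R :: "nat \<Rightarrow> nat \<Rightarrow> (nat \<Rightarrow> nat \<Rightarrow> real) \<Rightarrow> (nat \<Rightarrow> nat \<Rightarrow> real) \<Rightarrow> nat \<Rightarrow> nat \<Rightarrow> real" where
  "P_R k n P R a b =
     ((\<Sum>c<k. \<Sum>d<k. R a c * P c d * R b d)
        - (if a = b then (\<Sum>i<k. P i i * R a i) / real n else 0))
     / ((\<Sum>c<k. R a c) * ((\<Sum>c<k. R b c) - (if a = b then 1 / real n else 0)))"

end

theory Submission
  imports Defs
begin

text \<open>
  Given the labels, o_ab is a weighted sum of independent Bernoulli edge indicators with weights
  in {0, 1, 2}, and n_ab [P_R]_ab is its conditional mean. A Chernoff bound of Bernstein type,
  exp (2 c^2 mu - c t) for 0 <= c <= 1/2, controls the deviations of such a sum in terms of its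
  mean mu = O(rho_n n^2) rather than the number of pairs.

  For the true labels every community has at least n pi_a / 2 members outside an event of
  probability exp (- Omega(n)). Then n_ab >= const n^2, and a deviation of sqrt (delta rho_n log n) / n
  has probability n^(- Omega(delta)), which tends to zero.

  For the uniform statement, a deviation of delta rho_n at a fixed triple (a, b, e) has probability
  exp (- Omega(rho_n n^2)). Since n rho_n tends to infinity, this beats the k^(n+2) triples of the
  union bound: the failure probabilities are eventually below 2 k^2 e^(-n), and Borel-Cantelli
  gives the almost sure statement.
\<close>

section \<open>Chernoff bounds for product pmfs\<close>

lemma exp_le_one_add_self_add_square:
  fixes x :: real
  assumes "\<bar>x\<bar> \<le> 1"
  shows "exp x \<le> 1 + x + x\<^sup>2"
proof (cases "x \<ge> 0")
  case True
  then show ?thesis using exp_bound[of x] assms by auto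
next
  case False
  define y where "y = - x"
  have y: "0 < y" "y \<le> 1" using False assms by (auto simp: y_def)
  have "exp (- y) \<le> 1 / (1 + y)"
    using exp_ge_add_one_self[of y] y by (simp add: exp_minus field_simps)
  also have "\<dots> \<le> 1 - y + y\<^sup>2"
  proof -
    have "(1 - y + y\<^sup>2) * (1 + y) = 1 + y ^ 3"
      by (simp add: algebra_simps power2_eq_square power3_eq_cube)
    then show ?thesis using y by (simp add: field_simps)
  qed
  finally show ?thesis by (simp add: y_def)
qed

lemma integrable_measure_pmf_bounded:
  fixes f :: "'a \<Rightarrow> real"
  assumes "\<And>x. x \<in> set_pmf p \<Longrightarrow> \<bar>f x\<bar> \<le> B"
  shows "integrable (measure_pmf p) f"
  by (rule measure_pmf.integrable_const_bound[where B = B]) (auto intro!: AE_pmfI assms)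

lemma measure_pmf_expectation_exp_le:
  fixes f :: "'a \<Rightarrow> real"
  assumes bounded: "\<And>x. x \<in> set_pmf p \<Longrightarrow> \<bar>f x\<bar> \<le> K" and cK: "\<bar>c\<bar> * K \<le> 1"
  shows "measure_pmf.expectation p (\<lambda>x. exp (c * f x))
           \<le> exp (c * measure_pmf.expectation p f + c\<^sup>2 * measure_pmf.expectation p (\<lambda>x. (f x)\<^sup>2))"
proof -
  have cf: "\<bar>c * f x\<bar> \<le> 1" if "x \<in> set_pmf p" for x
  proof -
    have "\<bar>c * f x\<bar> \<le> \<bar>c\<bar> * K" unfolding abs_mult by (intro mult_left_mono bounded that) simp
    then show ?thesis using cK by linarith
  qed
  have int_f: "integrable p f"
    by (rule integrable_measure_pmf_bounded) (rule bounded)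
  have int_f2: "integrable p (\<lambda>x. (f x)\<^sup>2)"
  proof (rule integrable_measure_pmf_bounded)
    fix x assume "x \<in> set_pmf p"
    then have "\<bar>f x\<bar>\<^sup>2 \<le> K\<^sup>2" by (intro power_mono bounded) simp_all
    then show "\<bar>(f x)\<^sup>2\<bar> \<le> K\<^sup>2" by simp
  qed
  have int_exp: "integrable p (\<lambda>x. exp (c * f x))"
    by (rule integrable_measure_pmf_bounded[where B = "exp 1"]) (use cf in \<open>force simp: abs_le_iff\<close>)
  have "measure_pmf.expectation p (\<lambda>x. exp (c * f x))
          \<le> measure_pmf.expectation p (\<lambda>x. 1 + c * f x + c\<^sup>2 * (f x)\<^sup>2)"
    using exp_le_one_add_self_add_square[OF cf]
    by (intro integral_mono_AE AE_pmfI int_exp) (auto simp: power_mult_distrib int_f int_f2)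
  also have "\<dots> = 1 + c * measure_pmf.expectation p f + c\<^sup>2 * measure_pmf.expectation p (\<lambda>x. (f x)\<^sup>2)"
    using int_f int_f2 by simp
  also have "\<dots> \<le> exp (c * measure_pmf.expectation p f + c\<^sup>2 * measure_pmf.expectation p (\<lambda>x. (f x)\<^sup>2))"
    using exp_ge_add_one_self by (simp add: add.assoc)
  finally show ?thesis .
qed

lemma chernoff_Pi_pmf:
  fixes q :: "'i \<Rightarrow> 'b pmf" and g :: "'i \<Rightarrow> 'b \<Rightarrow> real"
  assumes fin: "finite I"
    and bounded: "\<And>i x. i \<in> I \<Longrightarrow> x \<in> set_pmf (q i) \<Longrightarrow> \<bar>g i x\<bar> \<le> K" and cK: "\<bar>c\<bar> * K \<le> 1"
  shows "measure_pmf.prob (Pi_pmf I d q)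
           {y. r \<le> c * ((\<Sum>i\<in>I. g i (y i)) - (\<Sum>i\<in>I. measure_pmf.expectation (q i) (g i)))}
         \<le> exp (c\<^sup>2 * (\<Sum>i\<in>I. measure_pmf.expectation (q i) (\<lambda>x. (g i x)\<^sup>2)) - r)"
proof -
  define \<mu> where "\<mu> = (\<Sum>i\<in>I. measure_pmf.expectation (q i) (g i))"
  define V where "V = (\<Sum>i\<in>I. measure_pmf.expectation (q i) (\<lambda>x. (g i x)\<^sup>2))"
  define u where "u y = exp (c * ((\<Sum>i\<in>I. g i (y i)) - \<mu>))" for y :: "'i \<Rightarrow> 'b"
  have u_prod: "u y = exp (- c * \<mu>) * (\<Prod>i\<in>I. exp (c * g i (y i)))" for y
    using fin by (simp add: u_def exp_sum sum_distrib_left right_diff_distrib exp_diff exp_minus field_simps)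
  have int_exp: "integrable (measure_pmf (q i)) (\<lambda>x. exp (c * g i x))" if "i \<in> I" for i
  proof (rule integrable_measure_pmf_bounded[where B = "exp 1"])
    fix x assume "x \<in> set_pmf (q i)"
    then have "\<bar>c * g i x\<bar> \<le> \<bar>c\<bar> * K" unfolding abs_mult by (intro mult_left_mono bounded that) simp_all
    then show "\<bar>exp (c * g i x)\<bar> \<le> exp 1" using cK by simp
  qed
  have "measure_pmf.expectation (Pi_pmf I d q) u
          = exp (- c * \<mu>) * (\<Prod>i\<in>I. measure_pmf.expectation (q i) (\<lambda>x. exp (c * g i x)))"
    unfolding u_prod
    by (subst integral_mult_right_zero, subst expectation_prod_Pi_pmf) (use fin int_exp in auto)
  also have "\<dots> \<le> exp (- c * \<mu>) * (\<Prod>i\<in>I. exp (c * measure_pmf.expectation (q i) (g i)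
                    + c\<^sup>2 * measure_pmf.expectation (q i) (\<lambda>x. (g i x)\<^sup>2)))"
    by (intro mult_left_mono prod_mono conjI measure_pmf_expectation_exp_le[OF bounded cK]
        integral_nonneg_AE AE_pmfI) auto
  also have "\<dots> = exp (c\<^sup>2 * V)"
  proof -
    have "(\<Prod>i\<in>I. exp (c * measure_pmf.expectation (q i) (g i)
            + c\<^sup>2 * measure_pmf.expectation (q i) (\<lambda>x. (g i x)\<^sup>2))) = exp (c * \<mu> + c\<^sup>2 * V)"
      using fin by (simp add: \<mu>_def V_def exp_sum[symmetric] sum.distrib sum_distrib_left)
    then show ?thesis by (simp add: exp_add[symmetric])
  qed
  finally have Eu: "measure_pmf.expectation (Pi_pmf I d q) u \<le> exp (c\<^sup>2 * V)" .
  have int_u: "integrable (measure_pmf (Pi_pmf I d q)) u"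
    unfolding u_prod by (intro integrable_mult_right integrable_prod_Pi_pmf fin int_exp)
  have "measure_pmf.prob (Pi_pmf I d q) {y. r \<le> c * ((\<Sum>i\<in>I. g i (y i)) - \<mu>)}
          \<le> measure_pmf.prob (Pi_pmf I d q) {y \<in> space (measure_pmf (Pi_pmf I d q)). exp r \<le> u y}"
    by (intro measure_pmf.finite_measure_mono) (auto simp: u_def)
  also have "\<dots> \<le> measure_pmf.expectation (Pi_pmf I d q) u / exp r"
    by (intro integral_Markov_inequality_measure int_u) (auto simp: u_def intro!: AE_pmfI)
  also have "\<dots> \<le> exp (c\<^sup>2 * V - r)"
    using Eu by (simp add: exp_diff divide_right_mono)
  finally show ?thesis by (simp add: \<mu>_def V_def)
qed

lemma chernoff_Pi_pmf_abs:
  fixes q :: "'i \<Rightarrow> 'b pmf" and g :: "'i \<Rightarrow> 'b \<Rightarrow> real"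
  assumes fin: "finite I"
    and bounded: "\<And>i x. i \<in> I \<Longrightarrow> x \<in> set_pmf (q i) \<Longrightarrow> \<bar>g i x\<bar> \<le> K"
    and c: "0 \<le> c" "c * K \<le> 1"
  shows "measure_pmf.prob (Pi_pmf I d q)
           {y. t \<le> \<bar>(\<Sum>i\<in>I. g i (y i)) - (\<Sum>i\<in>I. measure_pmf.expectation (q i) (g i))\<bar>}
         \<le> 2 * exp (c\<^sup>2 * (\<Sum>i\<in>I. measure_pmf.expectation (q i) (\<lambda>x. (g i x)\<^sup>2)) - c * t)"
proof -
  define D where "D y = (\<Sum>i\<in>I. g i (y i)) - (\<Sum>i\<in>I. measure_pmf.expectation (q i) (g i))"
    for y :: "'i \<Rightarrow> 'b"
  define B where "B = exp (c\<^sup>2 * (\<Sum>i\<in>I. measure_pmf.expectation (q i) (\<lambda>x. (g i x)\<^sup>2)) - c * t)"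
  have cK: "\<bar>c\<bar> * K \<le> 1" "\<bar>- c\<bar> * K \<le> 1"
    using c by simp_all
  have "{y. t \<le> \<bar>D y\<bar>} \<subseteq> {y. c * t \<le> c * D y} \<union> {y. c * t \<le> - c * D y}"
  proof
    fix y assume "y \<in> {y. t \<le> \<bar>D y\<bar>}"
    then have "t \<le> D y \<or> t \<le> - D y" by (auto split: abs_split)
    then show "y \<in> {y. c * t \<le> c * D y} \<union> {y. c * t \<le> - c * D y}"
      using mult_left_mono[OF _ c(1)] by fastforce
  qed
  then have "measure_pmf.prob (Pi_pmf I d q) {y. t \<le> \<bar>D y\<bar>}
      \<le> measure_pmf.prob (Pi_pmf I d q) ({y. c * t \<le> c * D y} \<union> {y. c * t \<le> - c * D y})"
    by (intro measure_pmf.finite_measure_mono) auto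
  also have "\<dots> \<le> measure_pmf.prob (Pi_pmf I d q) {y. c * t \<le> c * D y}
                    + measure_pmf.prob (Pi_pmf I d q) {y. c * t \<le> - c * D y}"
    by (rule measure_Un_le) auto
  also have "\<dots> \<le> B + B"
  proof (rule add_mono)
    show "measure_pmf.prob (Pi_pmf I d q) {y. c * t \<le> c * D y} \<le> B"
      unfolding B_def D_def by (rule chernoff_Pi_pmf[OF fin bounded cK(1)])
    have "measure_pmf.prob (Pi_pmf I d q) {y. c * t \<le> - c * D y}
            \<le> exp ((- c)\<^sup>2 * (\<Sum>i\<in>I. measure_pmf.expectation (q i) (\<lambda>x. (g i x)\<^sup>2)) - c * t)"
      unfolding D_def by (rule chernoff_Pi_pmf[OF fin bounded cK(2)])
    then show "measure_pmf.prob (Pi_pmf I d q) {y. c * t \<le> - c * D y} \<le> B"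
      by (simp add: B_def)
  qed
  finally show ?thesis by (simp add: D_def B_def)
qed

section \<open>Edge counts as sums over vertex pairs\<close>

definition pairs :: "nat \<Rightarrow> (nat \<times> nat) set" where
  "pairs n = {(i, j). i < j \<and> j < n}"

lemma finite_pairs [simp]: "finite (pairs n)"
  by (rule finite_subset[of _ "{..<n} \<times> {..<n}"]) (auto simp: pairs_def)

lemma sum_square_eq_sum_pairs:
  fixes f :: "nat \<Rightarrow> nat \<Rightarrow> real"
  shows "(\<Sum>i<n. \<Sum>j<n. f i j) = (\<Sum>(i, j)\<in>pairs n. f i j + f j i) + (\<Sum>i<n. f i i)"
proof (induction n)
  case 0
  then show ?case by (simp add: pairs_def)
next
  case (Suc n)
  have split: "pairs (Suc n) = pairs n \<union> (\<lambda>i. (i, n)) ` {..<n}"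
    by (auto simp: pairs_def less_Suc_eq)
  have "(\<Sum>(i, j)\<in>pairs (Suc n). f i j + f j i)
      = (\<Sum>(i, j)\<in>pairs n. f i j + f j i) + (\<Sum>(i, j)\<in>(\<lambda>i. (i, n)) ` {..<n}. f i j + f j i)"
    unfolding split by (rule sum.union_disjoint) (simp_all, auto simp: pairs_def)
  also have "(\<Sum>(i, j)\<in>(\<lambda>i. (i, n)) ` {..<n}. f i j + f j i) = (\<Sum>i<n. f i n + f n i)"
    by (subst sum.reindex) (auto simp: inj_on_def)
  finally show ?case
    using Suc.IH by (simp add: sum.distrib)
qed

definition pair_weight :: "(nat \<Rightarrow> nat) \<Rightarrow> nat \<Rightarrow> nat \<Rightarrow> nat \<times> nat \<Rightarrow> real" where
  "pair_weight e a b p =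
     of_bool (e (fst p) = a \<and> e (snd p) = b) + of_bool (e (snd p) = a \<and> e (fst p) = b)"

lemma pair_weight_bounds:
  "0 \<le> pair_weight e a b p" "pair_weight e a b p \<le> 2"
  "(pair_weight e a b p)\<^sup>2 \<le> 2 * pair_weight e a b p"
proof -
  have "0 \<le> w \<and> w \<le> 2 \<and> w\<^sup>2 \<le> 2 * w" if "w = of_bool P + of_bool Q" for w :: real and P Q
    unfolding that by (cases P; cases Q) simp_all
  from this[OF pair_weight_def] show "0 \<le> pair_weight e a b p" "pair_weight e a b p \<le> 2"
    "(pair_weight e a b p)\<^sup>2 \<le> 2 * pair_weight e a b p"
    by simp_all
qed

lemma o_ab_symm_adj:
  "o_ab n (symm_adj B) e a b = (\<Sum>p\<in>pairs n. pair_weight e a b p * of_bool (B p))"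
proof -
  have diagonal: "(\<Sum>i<n. if e i = a \<and> e i = b \<and> symm_adj B i i then 1 else 0 :: real) = 0"
    by (simp add: symm_adj_def)
  have off_diagonal:
    "(if e i = a \<and> e j = b \<and> symm_adj B i j then 1 else 0)
       + (if e j = a \<and> e i = b \<and> symm_adj B j i then 1 else 0 :: real)
     = pair_weight e a b (i, j) * of_bool (B (i, j))" if "(i, j) \<in> pairs n" for i j
  proof -
    have "symm_adj B i j = B (i, j)" "symm_adj B j i = B (i, j)"
      using that by (auto simp: pairs_def symm_adj_def)
    moreover have "(if P1 \<and> P2 \<and> X then 1 else 0) + (if Q1 \<and> Q2 \<and> X then 1 else 0 :: real)
        = (of_bool (P1 \<and> P2) + of_bool (Q1 \<and> Q2)) * of_bool X" for P1 P2 Q1 Q2 X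
      by (cases X) simp_all
    ultimately show ?thesis
      unfolding pair_weight_def fst_conv snd_conv by presburger
  qed
  show ?thesis
    unfolding o_ab_def sum_square_eq_sum_pairs diagonal
    by (simp add: off_diagonal case_prod_unfold cong: sum.cong)
qed

lemma real_n_a_eq_sum: "real (n_a n e a) = (\<Sum>i<n. of_bool (e i = a))"
  by (simp add: n_a_def Int_def conj_commute lessThan_def)

lemma n_ab_eq_sum_pair_weight: "n_ab n e a b = (\<Sum>p\<in>pairs n. pair_weight e a b p)"
proof -
  define f where "f i j = (of_bool (e i = a) * of_bool (e j = b) :: real)" for i j
  have "(\<Sum>p\<in>pairs n. pair_weight e a b p) = (\<Sum>(i, j)\<in>pairs n. f i j + f j i)"
    unfolding pair_weight_def f_def of_bool_conj by (simp add: case_prod_unfold)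
  also have "\<dots> = (\<Sum>i<n. \<Sum>j<n. f i j) - (\<Sum>i<n. f i i)"
    unfolding sum_square_eq_sum_pairs by simp
  also have "(\<Sum>i<n. \<Sum>j<n. f i j) = real (n_a n e a) * real (n_a n e b)"
    unfolding f_def real_n_a_eq_sum sum_product ..
  also have "(\<Sum>i<n. f i i) = of_bool (a = b) * real (n_a n e a)"
    unfolding f_def real_n_a_eq_sum sum_distrib_left by (intro sum.cong) auto
  finally show ?thesis
    unfolding n_ab_def by (cases "a = b") (simp_all add: algebra_simps)
qed

definition community :: "nat \<Rightarrow> (nat \<Rightarrow> nat) \<Rightarrow> nat \<Rightarrow> nat set" where
  "community n e a = {i. i < n \<and> e i = a}"

lemma community_eq: "community n e a = {..<n} \<inter> {i. e i = a}"
  by (auto simp: community_def)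

lemma n_a_eq_card_community: "n_a n e a = card (community n e a)"
  by (simp add: n_a_def community_def)

lemma sum_confusion_mult:
  assumes z: "\<forall>i<n. z i < k"
  shows "(\<Sum>c<k. confusion n e z a c * X c) = (\<Sum>i\<in>community n e a. X (z i)) / real n"
proof -
  have conf: "confusion n e z a c = (\<Sum>i\<in>community n e a. of_bool (z i = c)) / real n" for c
    by (simp add: confusion_def community_def Int_def conj_assoc)
  have "(\<Sum>c<k. confusion n e z a c * X c)
      = (\<Sum>c<k. \<Sum>i\<in>community n e a. of_bool (z i = c) * X c) / real n"
    unfolding conf times_divide_eq_left sum_distrib_right sum_divide_distrib[symmetric] ..
  also have "\<dots> = (\<Sum>i\<in>community n e a. \<Sum>c<k. of_bool (z i = c) * X c) / real n"
    by (subst sum.swap) (rule refl)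
  also have "\<dots> = (\<Sum>i\<in>community n e a. X (z i)) / real n"
    using z by (intro arg_cong[where f = "\<lambda>x. x / real n"] sum.cong) (auto simp: community_def)
  finally show ?thesis .
qed

text \<open>The conditional mean of \<open>o_ab n A e a b\<close> given the labels \<open>z\<close>, when the pair \<open>{i, j}\<close>
  is an edge with probability \<open>P (z i) (z j)\<close>.\<close>

definition expected_edges ::
  "(nat \<Rightarrow> nat \<Rightarrow> real) \<Rightarrow> nat \<Rightarrow> (nat \<Rightarrow> nat) \<Rightarrow> (nat \<Rightarrow> nat) \<Rightarrow> nat \<Rightarrow> nat \<Rightarrow> real" where
  "expected_edges P n z e a b = (\<Sum>p\<in>pairs n. pair_weight e a b p * P (z (fst p)) (z (snd p)))"

lemma expected_edges_eq_sum_communities: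
  assumes z: "\<forall>i<n. z i < k" and P_sym: "\<forall>c<k. \<forall>d<k. P c d = P d c"
  shows "expected_edges P n z e a b
     = (\<Sum>i\<in>community n e a. \<Sum>j\<in>community n e b. P (z i) (z j))
       - of_bool (a = b) * (\<Sum>i\<in>community n e a. P (z i) (z i))"
proof -
  define f where "f i j = of_bool (e i = a) * (of_bool (e j = b) * P (z i) (z j))" for i j
  have "expected_edges P n z e a b = (\<Sum>(i, j)\<in>pairs n. f i j + f j i)"
    unfolding expected_edges_def
  proof (intro sum.cong refl)
    fix p assume "p \<in> pairs n"
    then obtain i j where "p = (i, j)" "i < n" "j < n"
      by (auto simp: pairs_def)
    then show "pair_weight e a b p * P (z (fst p)) (z (snd p)) = (case p of (i, j) \<Rightarrow> f i j + f j i)"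
      using z P_sym by (simp add: pair_weight_def f_def of_bool_conj algebra_simps)
  qed
  also have "\<dots> = (\<Sum>i<n. \<Sum>j<n. f i j) - (\<Sum>i<n. f i i)"
    unfolding sum_square_eq_sum_pairs by simp
  also have "(\<Sum>i<n. \<Sum>j<n. f i j) = (\<Sum>i<n. of_bool (e i = a) * (\<Sum>j<n. of_bool (e j = b) * P (z i) (z j)))"
    unfolding f_def sum_distrib_left ..
  also have "\<dots> = (\<Sum>i\<in>community n e a. \<Sum>j\<in>community n e b. P (z i) (z j))"
    by (simp add: community_eq)
  also have "(\<Sum>i<n. f i i) = of_bool (a = b) * (\<Sum>i\<in>community n e a. P (z i) (z i))"
    by (cases "a = b") (simp_all add: f_def community_eq)
  finally show ?thesis .
qed

lemma P_R_confusion: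
  assumes z: "\<forall>i<n. z i < k" and n: "0 < n" and P_sym: "\<forall>c<k. \<forall>d<k. P c d = P d c"
  shows "P_R k n P (confusion n e z) a b = expected_edges P n z e a b / n_ab n e a b"
proof -
  let ?R = "confusion n e z"
  have quadratic: "(\<Sum>c<k. \<Sum>d<k. ?R a c * P c d * ?R b d)
      = (\<Sum>i\<in>community n e a. \<Sum>j\<in>community n e b. P (z i) (z j)) / (real n)\<^sup>2"
  proof -
    have "(\<Sum>c<k. \<Sum>d<k. ?R a c * P c d * ?R b d) = (\<Sum>c<k. ?R a c * (\<Sum>d<k. ?R b d * P c d))"
      by (simp add: sum_distrib_left mult_ac)
    also have "\<dots> = (\<Sum>c<k. ?R a c * ((\<Sum>j\<in>community n e b. P c (z j)) / real n))"
      by (simp only: sum_confusion_mult[OF z])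
    also have "\<dots> = (\<Sum>i\<in>community n e a. (\<Sum>j\<in>community n e b. P (z i) (z j)) / real n) / real n"
      by (rule sum_confusion_mult[OF z])
    finally show ?thesis
      by (simp add: sum_divide_distrib power2_eq_square)
  qed
  have diagonal: "(\<Sum>c<k. P c c * ?R a c) = (\<Sum>i\<in>community n e a. P (z i) (z i)) / real n"
    using sum_confusion_mult[OF z, of e a "\<lambda>c. P c c"] by (simp add: mult.commute)
  have rows: "(\<Sum>c<k. ?R a' c) = real (n_a n e a') / real n" for a'
    using sum_confusion_mult[OF z, of e a' "\<lambda>_. 1"] by (simp add: n_a_eq_card_community)
  have numerator: "(\<Sum>c<k. \<Sum>d<k. ?R a c * P c d * ?R b d)
      - (if a = b then (\<Sum>c<k. P c c * ?R a c) / real n else 0)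
      = expected_edges P n z e a b / (real n)\<^sup>2"
    unfolding quadratic diagonal expected_edges_eq_sum_communities[OF z P_sym]
    using n by (simp add: diff_divide_distrib power2_eq_square)
  have denominator: "(\<Sum>c<k. ?R a c) * ((\<Sum>c<k. ?R b c) - (if a = b then 1 / real n else 0))
      = n_ab n e a b / (real n)\<^sup>2"
    unfolding rows n_ab_def using n by (simp add: field_simps power2_eq_square)
  show ?thesis
    unfolding P_R_def numerator denominator using n by simp
qed

section \<open>The two-stage structure of the SBM law\<close>

definition labels_pmf :: "nat \<Rightarrow> (nat \<Rightarrow> real) \<Rightarrow> nat \<Rightarrow> (nat \<Rightarrow> nat) pmf" where
  "labels_pmf k \<pi> n = Pi_pmf {..<n} 0 (\<lambda>_. comm_pmf k \<pi>)"

definition edge_pmf :: "(nat \<Rightarrow> nat \<Rightarrow> real) \<Rightarrow> nat \<Rightarrow> (nat \<Rightarrow> nat) \<Rightarrow> (nat \<times> nat \<Rightarrow> bool) pmf" where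
  "edge_pmf P n z = Pi_pmf (pairs n) False (\<lambda>p. bernoulli_pmf (P (z (fst p)) (z (snd p))))"

lemma sbm_pmf_eq_bind:
  "sbm_pmf k \<pi> S \<rho> n = bind_pmf (labels_pmf k \<pi> n)
     (\<lambda>z. map_pmf (\<lambda>B. (z, symm_adj B)) (edge_pmf (\<lambda>c d. \<rho> n * S c d) n z))"
  unfolding sbm_pmf_def labels_pmf_def edge_pmf_def pairs_def by (simp add: case_prod_unfold)

lemma pmf_comm_pmf:
  assumes "\<forall>a<k. 0 \<le> \<pi> a" and "(\<Sum>a<k. \<pi> a) = 1"
  shows "pmf (comm_pmf k \<pi>) a = (if a < k then \<pi> a else 0)"
proof -
  have "(\<integral>\<^sup>+ x. ennreal (if x < k then \<pi> x else 0) \<partial>count_space UNIV) = (\<Sum>x<k. ennreal (\<pi> x))"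
    by (subst nn_integral_count_space'[where A = "{..<k}"]) auto
  also have "\<dots> = 1"
    using assms by (subst sum_ennreal) auto
  finally show ?thesis
    unfolding comm_pmf_def using assms by (subst pmf_embed_pmf) auto
qed

lemma set_pmf_comm_pmf:
  assumes "\<forall>a<k. 0 < \<pi> a" and "(\<Sum>a<k. \<pi> a) = 1"
  shows "set_pmf (comm_pmf k \<pi>) = {..<k}"
  using assms by (auto simp: set_pmf_eq pmf_comm_pmf less_imp_le)

lemma labels_pmf_less:
  assumes "\<forall>a<k. 0 < \<pi> a" and "(\<Sum>a<k. \<pi> a) = 1"
    and "z \<in> set_pmf (labels_pmf k \<pi> n)" and "i < n"
  shows "z i < k"
  using assms by (auto simp: labels_pmf_def set_Pi_pmf PiE_dflt_def set_pmf_comm_pmf)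

lemma prob_bind_pmf_le:
  assumes "\<And>x. x \<in> set_pmf p \<Longrightarrow> x \<notin> U \<Longrightarrow> measure_pmf.prob (q x) X \<le> \<epsilon>" and "0 \<le> \<epsilon>"
  shows "measure_pmf.prob (bind_pmf p q) X \<le> \<epsilon> + measure_pmf.prob p U"
proof -
  have "emeasure (measure_pmf (bind_pmf p q)) X = (\<integral>\<^sup>+x. emeasure (measure_pmf (q x)) X \<partial>measure_pmf p)"
    by simp
  also have "\<dots> \<le> (\<integral>\<^sup>+x. (ennreal \<epsilon> + indicator U x) \<partial>measure_pmf p)"
  proof (intro nn_integral_mono_AE AE_pmfI)
    fix x assume x: "x \<in> set_pmf p"
    show "emeasure (measure_pmf (q x)) X \<le> ennreal \<epsilon> + indicator U x"
    proof (cases "x \<in> U")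
      case True
      then show ?thesis
        using measure_pmf.emeasure_le_1[of "q x" X] by (simp add: add_increasing)
    next
      case False
      then show ?thesis
        using assms(1)[OF x False] by (simp add: measure_pmf.emeasure_eq_measure ennreal_leI)
    qed
  qed
  also have "\<dots> = ennreal (\<epsilon> + measure_pmf.prob p U)"
    using assms(2) by (simp add: nn_integral_add measure_pmf.emeasure_eq_measure ennreal_plus)
  finally have "ennreal (measure_pmf.prob (bind_pmf p q) X) \<le> ennreal (\<epsilon> + measure_pmf.prob p U)"
    by (simp only: measure_pmf.emeasure_eq_measure)
  then show ?thesis
    using assms(2) by (simp add: ennreal_le_iff del: ennreal_plus)
qed

lemma prob_sbm_pmf_le:
  assumes \<pi>: "\<forall>a<k. 0 < \<pi> a" "(\<Sum>a<k. \<pi> a) = 1" and "0 \<le> \<epsilon>"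
    and edges: "\<And>z. \<forall>i<n. z i < k \<Longrightarrow> z \<notin> U \<Longrightarrow>
      measure_pmf.prob (edge_pmf (\<lambda>c d. \<rho> n * S c d) n z) {B. (z, symm_adj B) \<in> X} \<le> \<epsilon>"
  shows "measure_pmf.prob (sbm_pmf k \<pi> S \<rho> n) X \<le> \<epsilon> + measure_pmf.prob (labels_pmf k \<pi> n) U"
  unfolding sbm_pmf_eq_bind
proof (rule prob_bind_pmf_le[OF _ \<open>0 \<le> \<epsilon>\<close>])
  fix z assume "z \<in> set_pmf (labels_pmf k \<pi> n)" and "z \<notin> U"
  moreover from this(1) have "\<forall>i<n. z i < k"
    using labels_pmf_less[OF \<pi>] by blast
  ultimately show "measure_pmf.prob (map_pmf (\<lambda>B. (z, symm_adj B)) (edge_pmf (\<lambda>c d. \<rho> n * S c d) n z)) X \<le> \<epsilon>"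
    using edges by (simp add: vimage_def)
qed

lemma prob_small_community:
  assumes \<pi>: "\<forall>a<k. 0 < \<pi> a" "(\<Sum>a<k. \<pi> a) = 1" and "a < k"
  shows "measure_pmf.prob (labels_pmf k \<pi> n) {z. real (n_a n z a) < real n * \<pi> a / 2}
           \<le> exp (- (real n * \<pi> a / 16))"
proof -
  let ?g = "\<lambda>(_::nat) x. indicator {a} x :: real"
  have E: "measure_pmf.prob (comm_pmf k \<pi>) {a} = \<pi> a"
    using \<pi> \<open>a < k\<close> by (simp add: measure_pmf_single pmf_comm_pmf less_imp_le)
  have E2: "measure_pmf.expectation (comm_pmf k \<pi>) (\<lambda>x. (?g i x)\<^sup>2) = \<pi> a" for i :: nat
  proof -
    have "(\<lambda>x. (?g i x)\<^sup>2) = ?g i"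
      by (auto simp: indicator_def)
    then show ?thesis using E by simp
  qed
  have count: "real (n_a n z a) = (\<Sum>i<n. ?g i (z i))" for z
    by (simp add: real_n_a_eq_sum indicator_def)
  have "{z. real (n_a n z a) < real n * \<pi> a / 2}
      \<subseteq> {z. real n * \<pi> a / 8 \<le> - 1 / 4 * ((\<Sum>i<n. ?g i (z i))
                  - (\<Sum>i<n. measure_pmf.expectation (comm_pmf k \<pi>) (?g i)))}"
    by (auto simp: count E field_simps)
  then have "measure_pmf.prob (labels_pmf k \<pi> n) {z. real (n_a n z a) < real n * \<pi> a / 2}
      \<le> measure_pmf.prob (labels_pmf k \<pi> n) {z. real n * \<pi> a / 8 \<le> - 1 / 4 * ((\<Sum>i<n. ?g i (z i))
                  - (\<Sum>i<n. measure_pmf.expectation (comm_pmf k \<pi>) (?g i)))}"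
    by (rule measure_pmf.finite_measure_mono) simp
  also have "\<dots> \<le> exp ((- 1 / 4)\<^sup>2 * (\<Sum>i<n. measure_pmf.expectation (comm_pmf k \<pi>) (\<lambda>x. (?g i x)\<^sup>2))
                      - real n * \<pi> a / 8)"
    unfolding labels_pmf_def by (rule chernoff_Pi_pmf[where K = 1]) auto
  also have "\<dots> = exp (- (real n * \<pi> a / 16))"
    by (simp add: E2 power_divide)
  finally show ?thesis .
qed

section \<open>Concentration of the estimators\<close>

lemma prob_o_ab_deviation:
  assumes P: "\<And>p. p \<in> pairs n \<Longrightarrow> 0 \<le> P (z (fst p)) (z (snd p)) \<and> P (z (fst p)) (z (snd p)) \<le> 1"
    and c: "0 \<le> c" "c \<le> 1 / 2"
  shows "measure_pmf.prob (edge_pmf P n z)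
           {B. t \<le> \<bar>o_ab n (symm_adj B) e a b - expected_edges P n z e a b\<bar>}
         \<le> 2 * exp (2 * c\<^sup>2 * expected_edges P n z e a b - c * t)"
proof -
  let ?q = "\<lambda>p. bernoulli_pmf (P (z (fst p)) (z (snd p)))"
  let ?g = "\<lambda>p x. pair_weight e a b p * of_bool x"
  have mean: "measure_pmf.expectation (?q p) (?g p) = pair_weight e a b p * P (z (fst p)) (z (snd p))"
    if "p \<in> pairs n" for p
    using P[OF that] by simp
  have second_moment: "measure_pmf.expectation (?q p) (\<lambda>x. (?g p x)\<^sup>2)
      \<le> 2 * (pair_weight e a b p * P (z (fst p)) (z (snd p)))" if "p \<in> pairs n" for p
    using P[OF that] mult_right_mono[OF pair_weight_bounds(3), of "P (z (fst p)) (z (snd p))" e a b p]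
    by (simp add: mult.assoc)
  have "measure_pmf.prob (edge_pmf P n z)
           {B. t \<le> \<bar>o_ab n (symm_adj B) e a b - expected_edges P n z e a b\<bar>}
      = measure_pmf.prob (Pi_pmf (pairs n) False ?q)
           {B. t \<le> \<bar>(\<Sum>p\<in>pairs n. ?g p (B p)) - (\<Sum>p\<in>pairs n. measure_pmf.expectation (?q p) (?g p))\<bar>}"
    unfolding edge_pmf_def o_ab_symm_adj expected_edges_def by (simp only: sum.cong[OF refl mean])
  also have "\<dots> \<le> 2 * exp (c\<^sup>2 * (\<Sum>p\<in>pairs n. measure_pmf.expectation (?q p) (\<lambda>x. (?g p x)\<^sup>2)) - c * t)"
    using c pair_weight_bounds[of e a b] by (intro chernoff_Pi_pmf_abs[where K = 2]) auto
  also have "\<dots> \<le> 2 * exp (2 * c\<^sup>2 * expected_edges P n z e a b - c * t)"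
  proof -
    have "(\<Sum>p\<in>pairs n. measure_pmf.expectation (?q p) (\<lambda>x. (?g p x)\<^sup>2)) \<le> 2 * expected_edges P n z e a b"
      unfolding expected_edges_def sum_distrib_left by (intro sum_mono second_moment)
    from mult_left_mono[OF this, of "c\<^sup>2"]
    have "c\<^sup>2 * (\<Sum>p\<in>pairs n. measure_pmf.expectation (?q p) (\<lambda>x. (?g p x)\<^sup>2))
        \<le> 2 * c\<^sup>2 * expected_edges P n z e a b"
      by (simp add: mult_ac)
    then show ?thesis by simp
  qed
  finally show ?thesis .
qed

lemma expected_edges_le:
  assumes z: "\<forall>i<n. z i < k" and P: "\<forall>c<k. \<forall>d<k. P c d \<le> pmax"
  shows "expected_edges P n z e a b \<le> pmax * n_ab n e a b"
proof -
  have "expected_edges P n z e a b \<le> (\<Sum>p\<in>pairs n. pair_weight e a b p * pmax)"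
    unfolding expected_edges_def
    using z P pair_weight_bounds(1) by (intro sum_mono mult_left_mono) (auto simp: pairs_def)
  then show ?thesis
    by (simp add: n_ab_eq_sum_pair_weight sum_distrib_left mult.commute)
qed

lemma expected_edges_self:
  assumes z: "\<forall>i<n. z i < k" and P_sym: "\<forall>c<k. \<forall>d<k. P c d = P d c" and "a < k" "b < k"
  shows "expected_edges P n z z a b = P a b * n_ab n z a b"
proof -
  have pointwise: "pair_weight z a b p * P (z (fst p)) (z (snd p)) = pair_weight z a b p * P a b" for p
  proof (cases "z (fst p) = a \<and> z (snd p) = b \<or> z (snd p) = a \<and> z (fst p) = b")
    case True
    then show ?thesis using P_sym \<open>a < k\<close> \<open>b < k\<close> by auto
  next
    case False
    then have "\<not> (z (fst p) = a \<and> z (snd p) = b)" "\<not> (z (snd p) = a \<and> z (fst p) = b)"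
      by blast+
    then have "pair_weight z a b p = 0"
      unfolding pair_weight_def by (simp only: of_bool_eq add_0_left)
    then show ?thesis by simp
  qed
  have "expected_edges P n z z a b = (\<Sum>p\<in>pairs n. pair_weight z a b p * P a b)"
    unfolding expected_edges_def by (rule sum.cong[OF refl pointwise])
  then show ?thesis
    by (simp add: n_ab_eq_sum_pair_weight sum_distrib_left mult.commute)
qed

lemma P_R_confusion_self:
  assumes z: "\<forall>i<n. z i < k" and n: "0 < n" and P_sym: "\<forall>c<k. \<forall>d<k. P c d = P d c"
    and "a < k" "b < k" and N: "n_ab n z a b \<noteq> 0"
  shows "P_R k n P (confusion n z z) a b = P a b"
  using N by (simp add: P_R_confusion[OF z n P_sym] expected_edges_self[OF z P_sym \<open>a < k\<close> \<open>b < k\<close>])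

lemma n_ab_ge:
  assumes "\<forall>c<k. x \<le> real (n_a n e c)" and "2 \<le> x" and "a < k" "b < k"
  shows "x\<^sup>2 / 2 \<le> n_ab n e a b"
proof (cases "a = b")
  case True
  have "x\<^sup>2 / 2 \<le> x * (x - 1)"
    using \<open>2 \<le> x\<close> by (simp add: power2_eq_square field_simps)
  also have "\<dots> \<le> real (n_a n e a) * (real (n_a n e a) - 1)"
    using assms by (intro mult_mono) auto
  finally show ?thesis using True by (simp add: n_ab_def)
next
  case False
  have "x\<^sup>2 / 2 \<le> x * x"
    using \<open>2 \<le> x\<close> by (simp add: power2_eq_square)
  also have "\<dots> \<le> real (n_a n e a) * real (n_a n e b)"
    using assms by (intro mult_mono) auto
  finally show ?thesis using False by (simp add: n_ab_def)
qed

lemma prob_P_hat_deviation: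
  assumes z: "\<forall>i<n. z i < k" and n: "0 < n" and P_sym: "\<forall>c<k. \<forall>d<k. P c d = P d c"
    and P: "\<forall>c<k. \<forall>d<k. 0 \<le> P c d \<and> P c d \<le> pmax" and "pmax \<le> 1"
    and c: "0 \<le> c" "c \<le> 1 / 2" "4 * c * pmax \<le> \<theta>"
    and N: "0 < n_ab n e a b"
  shows "measure_pmf.prob (edge_pmf P n z)
           {B. \<theta> \<le> \<bar>P_hat n (symm_adj B) e a b - P_R k n P (confusion n e z) a b\<bar>}
         \<le> 2 * exp (- (c * \<theta> * n_ab n e a b / 2))"
proof -
  let ?N = "n_ab n e a b" and ?\<mu> = "expected_edges P n z e a b"
  have "{B. \<theta> \<le> \<bar>P_hat n (symm_adj B) e a b - P_R k n P (confusion n e z) a b\<bar>}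
      = {B. \<theta> * ?N \<le> \<bar>o_ab n (symm_adj B) e a b - ?\<mu>\<bar>}"
    using N by (simp add: P_hat_def P_R_confusion[OF z n P_sym] diff_divide_distrib[symmetric]
        abs_divide pos_le_divide_eq)
  moreover have "0 \<le> P (z (fst p)) (z (snd p)) \<and> P (z (fst p)) (z (snd p)) \<le> 1" if "p \<in> pairs n" for p
  proof -
    have "z (fst p) < k" "z (snd p) < k"
      using that z by (auto simp: pairs_def)
    then show ?thesis
      using P \<open>pmax \<le> 1\<close> by (meson order_trans)
  qed
  ultimately have "measure_pmf.prob (edge_pmf P n z)
           {B. \<theta> \<le> \<bar>P_hat n (symm_adj B) e a b - P_R k n P (confusion n e z) a b\<bar>}
        \<le> 2 * exp (2 * c\<^sup>2 * ?\<mu> - c * (\<theta> * ?N))"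
    using prob_o_ab_deviation c by simp
  also have "\<dots> \<le> 2 * exp (- (c * \<theta> * ?N / 2))"
  proof -
    have "2 * c\<^sup>2 * ?\<mu> \<le> 2 * c\<^sup>2 * (pmax * ?N)"
      using expected_edges_le[OF z] P by (intro mult_left_mono) auto
    also have "\<dots> \<le> c * \<theta> * ?N / 2"
      using mult_right_mono[OF c(3), of "c * ?N / 2"] c(1) N by (simp add: power2_eq_square mult_ac)
    finally show ?thesis by simp
  qed
  finally show ?thesis .
qed

lemma measure_pmf_prob_UN_le:
  assumes "finite T" and "\<And>t. t \<in> T \<Longrightarrow> measure_pmf.prob p (E t) \<le> b"
  shows "measure_pmf.prob p (\<Union>t\<in>T. E t) \<le> real (card T) * b"
proof -
  have "measure_pmf.prob p (\<Union>t\<in>T. E t) \<le> (\<Sum>t\<in>T. measure_pmf.prob p (E t))"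
    by (rule measure_UNION_le) (simp_all add: assms(1))
  also have "\<dots> \<le> (\<Sum>t\<in>T. b)"
    by (rule sum_mono) (rule assms(2))
  finally show ?thesis by simp
qed

lemma S_le_s_max:
  assumes "a < k" and "b < k"
  shows "S a b \<le> s_max k S"
proof -
  have "{S a b | a b. a < k \<and> b < k} = (\<lambda>(a, b). S a b) ` ({..<k} \<times> {..<k})"
    by auto
  then show ?thesis
    unfolding s_max_def using assms by (intro Max_ge) auto
qed

lemma s_max_pos:
  assumes "0 < k" and "\<forall>a<k. \<forall>b<k. 0 < S a b"
  shows "0 < s_max k S"
  using assms S_le_s_max[of 0 k 0 S] by fastforce

lemma prob_P_hat_true_labels_pair_deviation:
  fixes \<delta> \<rho> x :: real
  assumes z: "\<forall>i<n. z i < k" and n: "0 < n"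
    and S_sym: "\<forall>a<k. \<forall>b<k. S a b = S b a" and S_pos: "\<forall>a<k. \<forall>b<k. 0 < S a b"
    and \<rho>: "0 < \<rho>" "\<rho> * s_max k S \<le> 1" and \<delta>: "0 < \<delta>"
    and ab: "a < k" "b < k" and N: "x\<^sup>2 / 2 \<le> n_ab n z a b" and x: "2 \<le> x"
    and small: "sqrt (\<delta> * \<rho> * ln (real n)) / real n \<le> 2 * s_max k S * \<rho>"
  shows "measure_pmf.prob (edge_pmf (\<lambda>c d. \<rho> * S c d) n z)
           {B. sqrt (\<delta> * \<rho> * ln (real n)) / real n \<le> \<bar>P_hat n (symm_adj B) z a b - \<rho> * S a b\<bar>}
         \<le> 2 * exp (- (\<delta> * ln (real n) * x\<^sup>2 / (16 * s_max k S * (real n)\<^sup>2)))"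
proof -
  define \<theta> where "\<theta> = sqrt (\<delta> * \<rho> * ln (real n)) / real n"
  define s where "s = s_max k S"
  \<comment> \<open>Up to constants, this choice of c minimises the Chernoff exponent.\<close>
  define c where "c = \<theta> / (4 * s * \<rho>)"
  have s: "0 < s"
    unfolding s_def using ab S_pos by (intro s_max_pos) auto
  have ln_n: "0 \<le> ln (real n)"
    using n by simp
  have \<theta>: "0 \<le> \<theta>" and \<theta>_sq: "\<theta>\<^sup>2 = \<delta> * \<rho> * ln (real n) / (real n)\<^sup>2"
    using \<rho> \<delta> ln_n by (simp_all add: \<theta>_def power_divide)
  have c: "0 \<le> c" "c \<le> 1 / 2" "4 * c * (\<rho> * s) \<le> \<theta>"
    using \<theta> s \<rho> small[folded \<theta>_def] by (simp_all add: c_def s_def field_simps)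
  have P: "\<forall>c<k. \<forall>d<k. 0 \<le> \<rho> * S c d \<and> \<rho> * S c d \<le> \<rho> * s"
    using \<rho> S_pos S_le_s_max[of _ k _ S] by (auto simp: s_def less_imp_le)
  have N_pos: "0 < n_ab n z a b"
    using N x by (smt (verit) zero_less_divide_iff zero_less_power)
  have "P_R k n (\<lambda>c d. \<rho> * S c d) (confusion n z z) a b = \<rho> * S a b"
    using S_sym N_pos ab by (intro P_R_confusion_self[OF z n]) auto
  then have "measure_pmf.prob (edge_pmf (\<lambda>c d. \<rho> * S c d) n z)
      {B. \<theta> \<le> \<bar>P_hat n (symm_adj B) z a b - \<rho> * S a b\<bar>} \<le> 2 * exp (- (c * \<theta> * n_ab n z a b / 2))"
    using prob_P_hat_deviation[OF z n _ P _ c N_pos] S_sym \<rho> s by (simp add: s_def)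
  also have "\<dots> \<le> 2 * exp (- (\<delta> * ln (real n) * x\<^sup>2 / (16 * s * (real n)\<^sup>2)))"
  proof -
    have "c * \<theta> = \<theta>\<^sup>2 / (4 * s * \<rho>)"
      by (simp add: c_def power2_eq_square)
    also have "\<dots> = \<delta> * ln (real n) / (4 * s * (real n)\<^sup>2)"
      using \<rho> by (simp add: \<theta>_sq)
    finally have "c * \<theta> * n_ab n z a b / 2 = \<delta> * ln (real n) * n_ab n z a b / (8 * s * (real n)\<^sup>2)"
      by simp
    also have "\<dots> \<ge> \<delta> * ln (real n) * (x\<^sup>2 / 2) / (8 * s * (real n)\<^sup>2)"
      using N \<delta> ln_n s by (intro divide_right_mono mult_left_mono) auto
    finally show ?thesis
      by simp
  qed
  finally show ?thesis
    unfolding \<theta>_def s_def .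
qed

lemma prob_P_hat_true_labels_deviation_given_labels:
  fixes \<delta> \<rho> x :: real
  assumes z: "\<forall>i<n. z i < k" and n: "0 < n"
    and S_sym: "\<forall>a<k. \<forall>b<k. S a b = S b a" and S_pos: "\<forall>a<k. \<forall>b<k. 0 < S a b"
    and \<rho>: "0 < \<rho>" "\<rho> * s_max k S \<le> 1" and \<delta>: "0 < \<delta>"
    and sizes: "\<forall>a<k. x \<le> real (n_a n z a)" and x: "2 \<le> x"
    and small: "sqrt (\<delta> * \<rho> * ln (real n)) / real n \<le> 2 * s_max k S * \<rho>"
  shows "measure_pmf.prob (edge_pmf (\<lambda>c d. \<rho> * S c d) n z)
           {B. \<exists>a<k. \<exists>b<k. sqrt (\<delta> * \<rho> * ln (real n)) / real n
                             \<le> \<bar>P_hat n (symm_adj B) z a b - \<rho> * S a b\<bar>}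
         \<le> real k * real k * (2 * exp (- (\<delta> * ln (real n) * x\<^sup>2 / (16 * s_max k S * (real n)\<^sup>2))))"
proof -
  have "{B. \<exists>a<k. \<exists>b<k. sqrt (\<delta> * \<rho> * ln (real n)) / real n
                             \<le> \<bar>P_hat n (symm_adj B) z a b - \<rho> * S a b\<bar>}
      = (\<Union>(a, b)\<in>{..<k} \<times> {..<k}. {B. sqrt (\<delta> * \<rho> * ln (real n)) / real n
                             \<le> \<bar>P_hat n (symm_adj B) z a b - \<rho> * S a b\<bar>})"
    by blast
  also have "measure_pmf.prob (edge_pmf (\<lambda>c d. \<rho> * S c d) n z) \<dots>
      \<le> real (card ({..<k} \<times> {..<k})) * (2 * exp (- (\<delta> * ln (real n) * x\<^sup>2 / (16 * s_max k S * (real n)\<^sup>2))))"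
  proof (rule measure_pmf_prob_UN_le, simp, clarsimp)
    fix a b assume ab: "a < k" "b < k"
    show "measure_pmf.prob (edge_pmf (\<lambda>c d. \<rho> * S c d) n z)
        {B. sqrt (\<delta> * \<rho> * ln (real n)) / real n \<le> \<bar>P_hat n (symm_adj B) z a b - \<rho> * S a b\<bar>}
      \<le> 2 * exp (- (\<delta> * ln (real n) * x\<^sup>2 / (16 * s_max k S * (real n)\<^sup>2)))"
      by (rule prob_P_hat_true_labels_pair_deviation[OF z n S_sym S_pos \<rho> \<delta> ab n_ab_ge[OF sizes x ab] x small])
  qed
  finally show ?thesis
    by simp
qed

lemma prob_P_hat_true_labels_deviation:
  fixes \<delta> pm :: real
  assumes \<pi>: "\<forall>a<k. 0 < \<pi> a" "(\<Sum>a<k. \<pi> a) = 1" and pm: "\<forall>a<k. pm \<le> \<pi> a"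
    and S_sym: "\<forall>a<k. \<forall>b<k. S a b = S b a" and S_pos: "\<forall>a<k. \<forall>b<k. 0 < S a b"
    and n: "0 < n" and \<rho>: "0 < \<rho> n" "\<rho> n * s_max k S \<le> 1"
    and n_pm: "2 \<le> real n * pm / 2" and \<delta>: "0 < \<delta>"
    and small: "sqrt (\<delta> * \<rho> n * ln (real n)) / real n \<le> 2 * s_max k S * \<rho> n"
  shows "measure_pmf.prob (sbm_pmf k \<pi> S \<rho> n)
           {x. \<exists>a<k. \<exists>b<k. sqrt (\<delta> * \<rho> n * ln (real n)) / real n
                             \<le> \<bar>P_hat n (snd x) (fst x) a b - \<rho> n * S a b\<bar>}
         \<le> real k * real k * (2 * exp (- (\<delta> * ln (real n) * pm\<^sup>2 / (64 * s_max k S))))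
           + (\<Sum>a<k. exp (- (real n * \<pi> a / 16)))"
proof -
  define U where "U = (\<Union>a<k. {z. real (n_a n z a) < real n * \<pi> a / 2})"
  have exponent: "\<delta> * ln (real n) * (real n * pm / 2)\<^sup>2 / (16 * s_max k S * (real n)\<^sup>2)
      = \<delta> * ln (real n) * pm\<^sup>2 / (64 * s_max k S)"
    using n by (simp add: power2_eq_square field_simps)
  have "measure_pmf.prob (sbm_pmf k \<pi> S \<rho> n)
           {x. \<exists>a<k. \<exists>b<k. sqrt (\<delta> * \<rho> n * ln (real n)) / real n
                             \<le> \<bar>P_hat n (snd x) (fst x) a b - \<rho> n * S a b\<bar>}
         \<le> real k * real k * (2 * exp (- (\<delta> * ln (real n) * pm\<^sup>2 / (64 * s_max k S))))
           + measure_pmf.prob (labels_pmf k \<pi> n) U"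
  proof (rule prob_sbm_pmf_le[where \<rho> = \<rho> and S = S, OF \<pi>])
    fix z assume z: "\<forall>i<n. z i < k" and "z \<notin> U"
    have "real n * pm / 2 \<le> real (n_a n z a)" if "a < k" for a
    proof -
      have "real n * pm / 2 \<le> real n * \<pi> a / 2"
        using pm that by (intro divide_right_mono mult_left_mono) auto
      also have "\<dots> \<le> real (n_a n z a)"
        using \<open>z \<notin> U\<close> that by (auto simp: U_def not_less)
      finally show ?thesis .
    qed
    with prob_P_hat_true_labels_deviation_given_labels[OF z n S_sym S_pos \<rho> \<delta> _ n_pm small]
    have "measure_pmf.prob (edge_pmf (\<lambda>c d. \<rho> n * S c d) n z)
        {B. \<exists>a<k. \<exists>b<k. sqrt (\<delta> * \<rho> n * ln (real n)) / real n
                             \<le> \<bar>P_hat n (symm_adj B) z a b - \<rho> n * S a b\<bar>}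
      \<le> real k * real k * (2 * exp (- (\<delta> * ln (real n) * pm\<^sup>2 / (64 * s_max k S))))"
      by (simp only: exponent) blast
    then show "measure_pmf.prob (edge_pmf (\<lambda>c d. \<rho> n * S c d) n z)
        {B. (z, symm_adj B) \<in> {x. \<exists>a<k. \<exists>b<k. sqrt (\<delta> * \<rho> n * ln (real n)) / real n
                             \<le> \<bar>P_hat n (snd x) (fst x) a b - \<rho> n * S a b\<bar>}}
      \<le> real k * real k * (2 * exp (- (\<delta> * ln (real n) * pm\<^sup>2 / (64 * s_max k S))))"
      by simp
  qed simp
  moreover have "measure_pmf.prob (labels_pmf k \<pi> n) U \<le> (\<Sum>a<k. exp (- (real n * \<pi> a / 16)))"
  proof -
    have "measure_pmf.prob (labels_pmf k \<pi> n) U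
        \<le> (\<Sum>a<k. measure_pmf.prob (labels_pmf k \<pi> n) {z. real (n_a n z a) < real n * \<pi> a / 2})"
      unfolding U_def by (rule measure_UNION_le) simp_all
    also have "\<dots> \<le> (\<Sum>a<k. exp (- (real n * \<pi> a / 16)))"
      using prob_small_community[OF \<pi>] by (intro sum_mono) simp
    finally show ?thesis .
  qed
  ultimately show ?thesis
    by linarith
qed

lemma card_F_set_le: "finite (F_set k n \<alpha>) \<and> card (F_set k n \<alpha>) \<le> k ^ n"
proof -
  have "F_set k n \<alpha> \<subseteq> {..<n} \<rightarrow>\<^sub>E {..<k}"
    by (auto simp: F_set_def)
  moreover have "finite ({..<n} \<rightarrow>\<^sub>E {..<k})" and "card ({..<n} \<rightarrow>\<^sub>E {..<k}) = k ^ n"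
    by (simp_all add: finite_PiE card_PiE)
  ultimately show ?thesis
    by (metis card_mono finite_subset)
qed

lemma prob_P_hat_triple_deviation:
  fixes \<alpha> \<delta> \<rho> c :: real
  assumes z: "\<forall>i<n. z i < k" and n: "0 < n"
    and S_sym: "\<forall>a<k. \<forall>b<k. S a b = S b a" and S_pos: "\<forall>a<k. \<forall>b<k. 0 < S a b"
    and \<rho>: "0 < \<rho>" "\<rho> * s_max k S \<le> 1" and \<alpha>: "2 \<le> \<alpha> * real n"
    and c: "0 \<le> c" "c \<le> 1 / 2" "4 * c * s_max k S \<le> \<delta>"
    and ab: "a < k" "b < k" and sizes: "\<forall>c<k. \<alpha> * real n \<le> real (n_a n e c)"
  shows "measure_pmf.prob (edge_pmf (\<lambda>c d. \<rho> * S c d) n z)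
           {B. \<delta> * \<rho> \<le> \<bar>P_hat n (symm_adj B) e a b - P_R k n (\<lambda>c d. \<rho> * S c d) (confusion n e z) a b\<bar>}
         \<le> 2 * exp (- (c * \<delta> * \<rho> * (\<alpha> * real n)\<^sup>2 / 4))"
proof -
  have P: "\<forall>c<k. \<forall>d<k. 0 \<le> \<rho> * S c d \<and> \<rho> * S c d \<le> \<rho> * s_max k S"
    using \<rho> S_pos S_le_s_max[of _ k _ S] by (auto simp: less_imp_le)
  have "0 < s_max k S"
    using ab S_pos by (intro s_max_pos) auto
  then have \<delta>: "0 \<le> \<delta>"
    using c(1,3) by (smt (verit) mult_nonneg_nonneg)
  have c': "4 * c * (\<rho> * s_max k S) \<le> \<delta> * \<rho>"
    using mult_right_mono[OF c(3), of \<rho>] \<rho> by (simp add: mult_ac)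
  have N: "(\<alpha> * real n)\<^sup>2 / 2 \<le> n_ab n e a b"
    using n_ab_ge[OF sizes \<alpha> ab] .
  then have N_pos: "0 < n_ab n e a b"
    using \<alpha> by (smt (verit) zero_less_divide_iff zero_less_power)
  have "measure_pmf.prob (edge_pmf (\<lambda>c d. \<rho> * S c d) n z)
      {B. \<delta> * \<rho> \<le> \<bar>P_hat n (symm_adj B) e a b - P_R k n (\<lambda>c d. \<rho> * S c d) (confusion n e z) a b\<bar>}
      \<le> 2 * exp (- (c * (\<delta> * \<rho>) * n_ab n e a b / 2))"
    using prob_P_hat_deviation[OF z n _ P _ c(1,2) c' N_pos] S_sym \<rho> by simp
  also have "\<dots> \<le> 2 * exp (- (c * \<delta> * \<rho> * (\<alpha> * real n)\<^sup>2 / 4))"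
    using mult_left_mono[OF N, of "c * \<delta> * \<rho>"] c(1) \<delta> \<rho> by (simp add: mult_ac)
  finally show ?thesis .
qed

lemma prob_P_hat_uniform_deviation_given_labels:
  fixes \<alpha> \<delta> \<rho> c :: real
  assumes z: "\<forall>i<n. z i < k" and n: "0 < n"
    and S_sym: "\<forall>a<k. \<forall>b<k. S a b = S b a" and S_pos: "\<forall>a<k. \<forall>b<k. 0 < S a b"
    and \<rho>: "0 < \<rho>" "\<rho> * s_max k S \<le> 1" and \<alpha>: "2 \<le> \<alpha> * real n"
    and c: "0 \<le> c" "c \<le> 1 / 2" "4 * c * s_max k S \<le> \<delta>"
  shows "measure_pmf.prob (edge_pmf (\<lambda>c d. \<rho> * S c d) n z)
           {B. \<exists>a<k. \<exists>b<k. \<exists>e\<in>F_set k n \<alpha>. \<delta> * \<rho>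
                 \<le> \<bar>P_hat n (symm_adj B) e a b - P_R k n (\<lambda>c d. \<rho> * S c d) (confusion n e z) a b\<bar>}
         \<le> real k * real k * real k ^ n * (2 * exp (- (c * \<delta> * \<rho> * (\<alpha> * real n)\<^sup>2 / 4)))"
proof -
  define T where "T = {..<k} \<times> {..<k} \<times> F_set k n \<alpha>"
  have "card T \<le> k * k * k ^ n"
    using card_F_set_le[of k n \<alpha>] by (simp add: T_def card_cartesian_product)
  then have card_T: "real (card T) \<le> real k * real k * real k ^ n"
    by (metis of_nat_le_iff of_nat_mult of_nat_power)
  have "{B. \<exists>a<k. \<exists>b<k. \<exists>e\<in>F_set k n \<alpha>. \<delta> * \<rho>
                 \<le> \<bar>P_hat n (symm_adj B) e a b - P_R k n (\<lambda>c d. \<rho> * S c d) (confusion n e z) a b\<bar>}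
      = (\<Union>(a, b, e)\<in>T. {B. \<delta> * \<rho>
                 \<le> \<bar>P_hat n (symm_adj B) e a b - P_R k n (\<lambda>c d. \<rho> * S c d) (confusion n e z) a b\<bar>})"
    by (auto simp: T_def)
  also have "measure_pmf.prob (edge_pmf (\<lambda>c d. \<rho> * S c d) n z) \<dots>
      \<le> real (card T) * (2 * exp (- (c * \<delta> * \<rho> * (\<alpha> * real n)\<^sup>2 / 4)))"
  proof (rule measure_pmf_prob_UN_le, simp add: T_def card_F_set_le, clarify)
    fix a b e assume "(a, b, e) \<in> T"
    then have ab: "a < k" "b < k" and sizes: "\<forall>c<k. \<alpha> * real n \<le> real (n_a n e c)"
      by (auto simp: T_def F_set_def)
    show "measure_pmf.prob (edge_pmf (\<lambda>c d. \<rho> * S c d) n z) {B. \<delta> * \<rho>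
               \<le> \<bar>P_hat n (symm_adj B) e a b - P_R k n (\<lambda>c d. \<rho> * S c d) (confusion n e z) a b\<bar>}
          \<le> 2 * exp (- (c * \<delta> * \<rho> * (\<alpha> * real n)\<^sup>2 / 4))"
      by (rule prob_P_hat_triple_deviation[OF z n S_sym S_pos \<rho> \<alpha> c ab sizes])
  qed
  also have "\<dots> \<le> real k * real k * real k ^ n * (2 * exp (- (c * \<delta> * \<rho> * (\<alpha> * real n)\<^sup>2 / 4)))"
    using card_T by (intro mult_right_mono) auto
  finally show ?thesis .
qed

lemma prob_P_hat_uniform_deviation:
  fixes \<alpha> \<delta> c :: real
  assumes \<pi>: "\<forall>a<k. 0 < \<pi> a" "(\<Sum>a<k. \<pi> a) = 1"
    and S_sym: "\<forall>a<k. \<forall>b<k. S a b = S b a" and S_pos: "\<forall>a<k. \<forall>b<k. 0 < S a b"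
    and n: "0 < n" and \<rho>: "0 < \<rho> n" "\<rho> n * s_max k S \<le> 1" and \<alpha>: "2 \<le> \<alpha> * real n"
    and c: "0 \<le> c" "c \<le> 1 / 2" "4 * c * s_max k S \<le> \<delta>"
  shows "measure_pmf.prob (sbm_pmf k \<pi> S \<rho> n)
           {x. \<exists>a<k. \<exists>b<k. \<exists>e\<in>F_set k n \<alpha>. \<delta> * \<rho> n
                 \<le> \<bar>P_hat n (snd x) e a b - P_R k n (\<lambda>c d. \<rho> n * S c d) (confusion n e (fst x)) a b\<bar>}
         \<le> real k * real k * real k ^ n * (2 * exp (- (c * \<delta> * \<rho> n * (\<alpha> * real n)\<^sup>2 / 4)))"
proof -
  have "measure_pmf.prob (sbm_pmf k \<pi> S \<rho> n)
           {x. \<exists>a<k. \<exists>b<k. \<exists>e\<in>F_set k n \<alpha>. \<delta> * \<rho> n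
                 \<le> \<bar>P_hat n (snd x) e a b - P_R k n (\<lambda>c d. \<rho> n * S c d) (confusion n e (fst x)) a b\<bar>}
         \<le> real k * real k * real k ^ n * (2 * exp (- (c * \<delta> * \<rho> n * (\<alpha> * real n)\<^sup>2 / 4)))
           + measure_pmf.prob (labels_pmf k \<pi> n) {}"
  proof (rule prob_sbm_pmf_le[where \<rho> = \<rho> and S = S, OF \<pi>])
    fix z assume "\<forall>i<n. z i < k"
    from prob_P_hat_uniform_deviation_given_labels[OF this n S_sym S_pos \<rho> \<alpha> c]
    show "measure_pmf.prob (edge_pmf (\<lambda>c d. \<rho> n * S c d) n z)
        {B. (z, symm_adj B) \<in> {x. \<exists>a<k. \<exists>b<k. \<exists>e\<in>F_set k n \<alpha>. \<delta> * \<rho> n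
                 \<le> \<bar>P_hat n (snd x) e a b - P_R k n (\<lambda>c d. \<rho> n * S c d) (confusion n e (fst x)) a b\<bar>}}
      \<le> real k * real k * real k ^ n * (2 * exp (- (c * \<delta> * \<rho> n * (\<alpha> * real n)\<^sup>2 / 4)))"
      by simp
  qed simp
  then show ?thesis
    by simp
qed

section \<open>Asymptotics\<close>

lemma tendsto_exp_neg_mult:
  fixes f :: "'a \<Rightarrow> real"
  assumes "0 < c" and "filterlim f at_top F"
  shows "((\<lambda>x. exp (- (c * f x))) \<longlongrightarrow> 0) F"
proof -
  have "filterlim (\<lambda>x. c * f x) at_top F"
    by (rule filterlim_tendsto_pos_mult_at_top[OF tendsto_const assms])
  then have "filterlim (\<lambda>x. - (c * f x)) at_bot F"
    by (simp add: filterlim_uminus_at_top[symmetric])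
  then show ?thesis
    by (rule filterlim_compose[OF exp_at_bot])
qed

lemma eventually_pos_mult_le_one:
  assumes "\<rho> \<longlonglongrightarrow> 0" and "filterlim (\<lambda>n. real n * \<rho> n) at_top sequentially" and "0 < s"
  shows "eventually (\<lambda>n. 0 < \<rho> n \<and> \<rho> n * s \<le> 1) sequentially"
proof -
  have "eventually (\<lambda>n. 1 \<le> real n * \<rho> n) sequentially"
    using assms(2) by (simp add: filterlim_at_top)
  moreover have "eventually (\<lambda>n. \<rho> n < 1 / s) sequentially"
    using order_tendstoD(2)[OF assms(1)] assms(3) by simp
  ultimately show ?thesis
  proof eventually_elim
    case (elim n)
    then have "0 < real n * \<rho> n"
      by linarith
    then have "0 < \<rho> n"
      by (simp add: zero_less_mult_iff)
    with elim assms(3) show ?case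
      by (simp add: pos_less_divide_eq less_imp_le mult.commute)
  qed
qed

lemma sqrt_log_div_le:
  fixes \<delta> r s :: real and n :: nat
  assumes "0 < n" and "0 \<le> r" and "0 \<le> s" and "1 \<le> real n * r"
    and "\<delta> * ln (real n) \<le> 4 * s\<^sup>2 * real n"
  shows "sqrt (\<delta> * r * ln (real n)) / real n \<le> 2 * s * r"
proof -
  have "\<delta> * r * ln (real n) \<le> r * (4 * s\<^sup>2 * real n)"
    using mult_left_mono[OF assms(5) assms(2)] by (simp add: mult_ac)
  also have "\<dots> \<le> r * (4 * s\<^sup>2 * real n) * (real n * r)"
    using mult_left_mono[OF assms(4), of "r * (4 * s\<^sup>2 * real n)"] assms(2) by simp
  also have "\<dots> = (2 * s * r * real n)\<^sup>2"
    by (simp add: power2_eq_square mult_ac)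
  finally have "sqrt (\<delta> * r * ln (real n)) \<le> 2 * s * r * real n"
    using assms by (metis real_sqrt_le_mono real_sqrt_abs abs_of_nonneg mult_nonneg_nonneg
        of_nat_0_le_iff zero_le_numeral)
  then show ?thesis
    using assms(1) by (simp add: divide_le_eq)
qed

lemma P_hat_true_labels_deviation_tendsto_0:
  fixes \<delta> :: real
  assumes \<pi>: "\<forall>a<k. 0 < \<pi> a" "(\<Sum>a<k. \<pi> a) = 1"
    and S_sym: "\<forall>a<k. \<forall>b<k. S a b = S b a" and S_pos: "\<forall>a<k. \<forall>b<k. 0 < S a b"
    and \<rho>_lim: "\<rho> \<longlonglongrightarrow> 0" and n\<rho>: "filterlim (\<lambda>n. real n * \<rho> n) at_top sequentially"
    and \<delta>: "0 < \<delta>"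
  shows "(\<lambda>n. measure_pmf.prob (sbm_pmf k \<pi> S \<rho> n)
           {x. \<exists>a<k. \<exists>b<k. sqrt (\<delta> * \<rho> n * ln (real n)) / real n
                             \<le> \<bar>P_hat n (snd x) (fst x) a b - \<rho> n * S a b\<bar>}) \<longlonglongrightarrow> 0"
proof -
  define s where "s = s_max k S"
  have "0 < k"
    using \<pi>(2) by (cases k) auto
  then have s: "0 < s"
    unfolding s_def using S_pos by (rule s_max_pos)
  obtain pm where pm: "0 < pm" and pm_le: "\<forall>a<k. pm \<le> \<pi> a"
  proof
    show "0 < Min (\<pi> ` {..<k})"
      using \<pi>(1) \<open>0 < k\<close> by (subst Min_gr_iff) auto
  qed simp
  define \<epsilon> where "\<epsilon> n = real k * real k * (2 * exp (- (\<delta> * pm\<^sup>2 / (64 * s) * ln (real n))))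
                     + (\<Sum>a<k. exp (- (\<pi> a / 16 * real n)))" for n
  have \<epsilon>: "\<epsilon> \<longlonglongrightarrow> 0"
  proof -
    have "(\<lambda>n. exp (- (\<delta> * pm\<^sup>2 / (64 * s) * ln (real n)))) \<longlonglongrightarrow> 0"
      using \<delta> pm s by (intro tendsto_exp_neg_mult filterlim_compose[OF ln_at_top filterlim_real_sequentially]) auto
    moreover have "(\<lambda>n. exp (- (\<pi> a / 16 * real n))) \<longlonglongrightarrow> 0" if "a < k" for a
      using \<pi>(1) that by (intro tendsto_exp_neg_mult filterlim_real_sequentially) auto
    ultimately have "\<epsilon> \<longlonglongrightarrow> real k * real k * (2 * 0) + 0"
      unfolding \<epsilon>_def by (intro tendsto_add tendsto_mult tendsto_const tendsto_null_sum) auto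
    then show ?thesis by simp
  qed
  have "eventually (\<lambda>n. 0 < n \<and> (0 < \<rho> n \<and> \<rho> n * s \<le> 1) \<and> 4 / pm \<le> real n \<and> 1 \<le> real n * \<rho> n
      \<and> ln (real n) / real n < 4 * s\<^sup>2 / \<delta>) sequentially"
  proof -
    have "0 < 4 * s\<^sup>2 / \<delta>"
      using s \<delta> by simp
    from order_tendstoD(2)[OF lim_ln_over_n this]
    have "eventually (\<lambda>n. ln (real n) / real n < 4 * s\<^sup>2 / \<delta>) sequentially" .
    with eventually_gt_at_top[of 0] eventually_pos_mult_le_one[OF \<rho>_lim n\<rho> s]
      filterlim_real_sequentially[unfolded filterlim_at_top, rule_format, of "4 / pm"]
      n\<rho>[unfolded filterlim_at_top, rule_format, of 1]
    show ?thesis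
      by eventually_elim blast
  qed
  then have "eventually (\<lambda>n. measure_pmf.prob (sbm_pmf k \<pi> S \<rho> n)
           {x. \<exists>a<k. \<exists>b<k. sqrt (\<delta> * \<rho> n * ln (real n)) / real n
                             \<le> \<bar>P_hat n (snd x) (fst x) a b - \<rho> n * S a b\<bar>} \<le> \<epsilon> n) sequentially"
  proof eventually_elim
    case (elim n)
    then have "2 \<le> real n * pm / 2"
      using pm by (simp add: field_simps)
    moreover have "sqrt (\<delta> * \<rho> n * ln (real n)) / real n \<le> 2 * s * \<rho> n"
      using elim s \<delta> by (intro sqrt_log_div_le) (auto simp: field_simps)
    ultimately show ?case
      using prob_P_hat_true_labels_deviation[OF \<pi> pm_le S_sym S_pos, of n \<rho> \<delta>] elim \<delta>
      by (simp add: \<epsilon>_def s_def mult_ac)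
  qed
  then show ?thesis
    by (rule tendsto_sandwich[OF always_eventually[OF allI[OF measure_nonneg]] _ tendsto_const \<epsilon>])
qed

lemma power_mult_exp_le_exp:
  fixes X :: real
  assumes "0 < k" and "real n * (ln (real k) + 1) \<le> X"
  shows "real k ^ n * exp (- X) \<le> exp (- real n)"
proof -
  have "real k ^ n * exp (- X) = exp (real n * ln (real k) - X)"
    using assms(1) by (simp add: exp_of_nat_mult exp_diff exp_minus field_simps)
  also have "\<dots> \<le> exp (- real n)"
    using assms(2) by (simp add: algebra_simps)
  finally show ?thesis .
qed

lemma P_hat_uniform_deviation_summable:
  fixes \<alpha> \<delta> :: real
  assumes \<pi>: "\<forall>a<k. 0 < \<pi> a" "(\<Sum>a<k. \<pi> a) = 1"
    and S_sym: "\<forall>a<k. \<forall>b<k. S a b = S b a" and S_pos: "\<forall>a<k. \<forall>b<k. 0 < S a b"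
    and \<rho>_lim: "\<rho> \<longlonglongrightarrow> 0" and n\<rho>: "filterlim (\<lambda>n. real n * \<rho> n) at_top sequentially"
    and \<alpha>: "0 < \<alpha>" and \<delta>: "0 < \<delta>"
  shows "summable (\<lambda>n. measure_pmf.prob (sbm_pmf k \<pi> S \<rho> n)
           {x. \<exists>a<k. \<exists>b<k. \<exists>e\<in>F_set k n \<alpha>. \<delta> * \<rho> n
                 \<le> \<bar>P_hat n (snd x) e a b - P_R k n (\<lambda>c d. \<rho> n * S c d) (confusion n e (fst x)) a b\<bar>})"
proof -
  define s where "s = s_max k S"
  define c where "c = min (1 / 2) (\<delta> / (4 * s))"
  define C where "C = c * \<delta> * \<alpha>\<^sup>2 / 4"
  have "0 < k"
    using \<pi>(2) by (cases k) auto
  then have s: "0 < s"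
    unfolding s_def using S_pos by (rule s_max_pos)
  have c: "0 \<le> c" "c \<le> 1 / 2" "4 * c * s \<le> \<delta>"
    using s \<delta> by (auto simp: c_def min_def field_simps)
  have C: "0 < C"
    using s \<delta> \<alpha> by (simp add: C_def c_def)
  have "eventually (\<lambda>n. 0 < n \<and> (0 < \<rho> n \<and> \<rho> n * s \<le> 1) \<and> 2 / \<alpha> \<le> real n
      \<and> (ln (real k) + 1) / C \<le> real n * \<rho> n) sequentially"
    using eventually_gt_at_top[of 0] eventually_pos_mult_le_one[OF \<rho>_lim n\<rho> s]
      filterlim_real_sequentially[unfolded filterlim_at_top, rule_format, of "2 / \<alpha>"]
      n\<rho>[unfolded filterlim_at_top, rule_format, of "(ln (real k) + 1) / C"]
    by eventually_elim blast
  then obtain N where N: "\<And>n. N \<le> n \<Longrightarrow> 0 < n \<and> (0 < \<rho> n \<and> \<rho> n * s \<le> 1) \<and> 2 / \<alpha> \<le> real n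
      \<and> (ln (real k) + 1) / C \<le> real n * \<rho> n"
    unfolding eventually_sequentially by blast
  show ?thesis
  proof (rule summable_comparison_test')
    show "summable (\<lambda>n. 2 * real k * real k * exp (- 1) ^ n)"
      by (intro summable_mult summable_geometric) simp
    fix n assume "N \<le> n"
    note n = N[OF this]
    have "2 \<le> \<alpha> * real n"
      using n \<alpha> by (simp add: field_simps)
    then have "measure_pmf.prob (sbm_pmf k \<pi> S \<rho> n)
           {x. \<exists>a<k. \<exists>b<k. \<exists>e\<in>F_set k n \<alpha>. \<delta> * \<rho> n
                 \<le> \<bar>P_hat n (snd x) e a b - P_R k n (\<lambda>c d. \<rho> n * S c d) (confusion n e (fst x)) a b\<bar>}
        \<le> 2 * real k * real k * (real k ^ n * exp (- (real n * (C * (real n * \<rho> n)))))"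
      using prob_P_hat_uniform_deviation[OF \<pi> S_sym S_pos, of n \<rho> \<alpha> c \<delta>] n c
      by (simp add: s_def C_def power2_eq_square mult_ac)
    also have "\<dots> \<le> 2 * real k * real k * exp (- real n)"
    proof -
      have "real n * (ln (real k) + 1) \<le> real n * (C * (real n * \<rho> n))"
        using n C by (intro mult_left_mono) (auto simp: field_simps)
      from power_mult_exp_le_exp[OF \<open>0 < k\<close> this] show ?thesis
        by (intro mult_left_mono) simp_all
    qed
    finally show "norm (measure_pmf.prob (sbm_pmf k \<pi> S \<rho> n)
           {x. \<exists>a<k. \<exists>b<k. \<exists>e\<in>F_set k n \<alpha>. \<delta> * \<rho> n
                 \<le> \<bar>P_hat n (snd x) e a b - P_R k n (\<lambda>c d. \<rho> n * S c d) (confusion n e (fst x)) a b\<bar>})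
        \<le> 2 * real k * real k * exp (- 1) ^ n"
      by (simp add: exp_of_nat_mult[symmetric])
  qed
qed

lemma measure_eq_prob_pmf_of_law:
  assumes "X \<in> M \<rightarrow>\<^sub>M count_space UNIV" and "distr M (count_space UNIV) X = measure_pmf p"
  shows "measure M {\<omega> \<in> space M. P (X \<omega>)} = measure_pmf.prob p {x. P x}"
proof -
  have "{\<omega> \<in> space M. P (X \<omega>)} = X -` {x. P x} \<inter> space M"
    by auto
  then show ?thesis
    unfolding assms(2)[symmetric] by (simp add: measure_distr[OF assms(1)])
qed

lemma measure_pmf_prob_Collect_eq_1_minus:
  "measure_pmf.prob p {x. P x} = 1 - measure_pmf.prob p {x. \<not> P x}"
proof -
  have "{x. P x} = space (measure_pmf p) - {x. \<not> P x}"
    by auto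
  then show ?thesis
    using measure_pmf.prob_compl[of "{x. \<not> P x}" p] by simp
qed

lemma prob_tendsto_1_of_pmf_law:
  assumes meas: "\<And>n. X n \<in> M \<rightarrow>\<^sub>M count_space UNIV"
    and law: "\<And>n. distr M (count_space UNIV) (X n) = measure_pmf (p n)"
    and "(\<lambda>n. measure_pmf.prob (p n) {x. \<not> Q n x}) \<longlonglongrightarrow> 0"
  shows "(\<lambda>n. measure M {\<omega> \<in> space M. Q n (X n \<omega>)}) \<longlonglongrightarrow> 1"
proof -
  have "measure M {\<omega> \<in> space M. Q n (X n \<omega>)} = 1 - measure_pmf.prob (p n) {x. \<not> Q n x}" for n
    using measure_eq_prob_pmf_of_law[OF meas law, where P = "Q n"]
      measure_pmf_prob_Collect_eq_1_minus[of "p n" "Q n"] by simp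
  moreover have "(\<lambda>n. 1 - measure_pmf.prob (p n) {x. \<not> Q n x}) \<longlonglongrightarrow> 1 - 0"
    by (intro tendsto_diff tendsto_const assms(3))
  ultimately show ?thesis
    by simp
qed

lemma AE_eventually_of_summable_pmf_law:
  assumes M: "prob_space M"
    and meas: "\<And>n. X n \<in> M \<rightarrow>\<^sub>M count_space UNIV"
    and law: "\<And>n. distr M (count_space UNIV) (X n) = measure_pmf (p n)"
    and summable: "summable (\<lambda>n. measure_pmf.prob (p n) {x. \<not> Q n x})"
  shows "AE \<omega> in M. eventually (\<lambda>n. Q n (X n \<omega>)) sequentially"
proof -
  define bad where "bad n = {\<omega> \<in> space M. \<not> Q n (X n \<omega>)}" for n
  have "bad n = X n -` {x. \<not> Q n x} \<inter> space M" for n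
    by (auto simp: bad_def)
  then have "bad n \<in> sets M" for n
    by (simp only:) (rule measurable_sets[OF meas], simp)
  moreover have "emeasure M (bad n) < \<infinity>" for n
    using finite_measure.emeasure_finite[OF prob_space.finite_measure[OF M]] by (simp add: less_top)
  moreover have "measure M (bad n) = measure_pmf.prob (p n) {x. \<not> Q n x}" for n
    unfolding bad_def by (rule measure_eq_prob_pmf_of_law[OF meas law])
  then have "summable (\<lambda>n. measure M (bad n))"
    using summable by simp
  ultimately have "AE \<omega> in M. eventually (\<lambda>n. \<omega> \<in> space M - bad n) sequentially"
    by (rule borel_cantelli_AE1)
  then show ?thesis
    by (rule AE_mp) (auto simp: bad_def elim: eventually_mono)
qed

lemma P_hat_true_labels_consistent:
  fixes \<delta> :: real
  assumes \<pi>: "\<forall>a<k. 0 < \<pi> a" "(\<Sum>a<k. \<pi> a) = 1"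
    and S_sym: "\<forall>a<k. \<forall>b<k. S a b = S b a" and S_pos: "\<forall>a<k. \<forall>b<k. 0 < S a b"
    and \<rho>_lim: "\<rho> \<longlonglongrightarrow> 0" and n\<rho>: "filterlim (\<lambda>n. real n * \<rho> n) at_top sequentially"
    and meas: "\<And>n. (\<lambda>\<omega>. (Z n \<omega>, A n \<omega>)) \<in> M \<rightarrow>\<^sub>M count_space UNIV"
    and law: "\<And>n. distr M (count_space UNIV) (\<lambda>\<omega>. (Z n \<omega>, A n \<omega>)) = measure_pmf (sbm_pmf k \<pi> S \<rho> n)"
    and "0 < \<delta>"
  shows "(\<lambda>n. measure M {\<omega> \<in> space M. \<forall>a<k. \<forall>b<k.
           \<bar>P_hat n (A n \<omega>) (Z n \<omega>) a b - \<rho> n * S a b\<bar> < sqrt (\<delta> * \<rho> n * ln (real n)) / real n})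
         \<longlonglongrightarrow> 1"
proof -
  let ?good = "\<lambda>n x. \<forall>a<k. \<forall>b<k.
    \<bar>P_hat n (snd x) (fst x) a b - \<rho> n * S a b\<bar> < sqrt (\<delta> * \<rho> n * ln (real n)) / real n"
  have "(\<lambda>n. measure M {\<omega> \<in> space M. ?good n (Z n \<omega>, A n \<omega>)}) \<longlonglongrightarrow> 1"
    using P_hat_true_labels_deviation_tendsto_0[OF \<pi> S_sym S_pos \<rho>_lim n\<rho> \<open>0 < \<delta>\<close>]
    by (intro prob_tendsto_1_of_pmf_law[where X = "\<lambda>n \<omega>. (Z n \<omega>, A n \<omega>)", OF meas law])
      (simp add: not_less)
  then show ?thesis
    by simp
qed

lemma P_hat_uniformly_consistent:
  fixes \<alpha> \<delta> :: real
  assumes \<pi>: "\<forall>a<k. 0 < \<pi> a" "(\<Sum>a<k. \<pi> a) = 1"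
    and S_sym: "\<forall>a<k. \<forall>b<k. S a b = S b a" and S_pos: "\<forall>a<k. \<forall>b<k. 0 < S a b"
    and \<rho>_lim: "\<rho> \<longlonglongrightarrow> 0" and n\<rho>: "filterlim (\<lambda>n. real n * \<rho> n) at_top sequentially"
    and M: "prob_space M"
    and meas: "\<And>n. (\<lambda>\<omega>. (Z n \<omega>, A n \<omega>)) \<in> M \<rightarrow>\<^sub>M count_space UNIV"
    and law: "\<And>n. distr M (count_space UNIV) (\<lambda>\<omega>. (Z n \<omega>, A n \<omega>)) = measure_pmf (sbm_pmf k \<pi> S \<rho> n)"
    and "0 < \<alpha>" and "0 < \<delta>"
  shows "AE \<omega> in M. eventually (\<lambda>n. \<forall>a<k. \<forall>b<k. \<forall>e\<in>F_set k n \<alpha>.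
           \<bar>P_hat n (A n \<omega>) e a b - P_R k n (\<lambda>c d. \<rho> n * S c d) (confusion n e (Z n \<omega>)) a b\<bar> < \<delta> * \<rho> n)
           sequentially"
proof -
  let ?good = "\<lambda>n x. \<forall>a<k. \<forall>b<k. \<forall>e\<in>F_set k n \<alpha>.
    \<bar>P_hat n (snd x) e a b - P_R k n (\<lambda>c d. \<rho> n * S c d) (confusion n e (fst x)) a b\<bar> < \<delta> * \<rho> n"
  have "AE \<omega> in M. eventually (\<lambda>n. ?good n (Z n \<omega>, A n \<omega>)) sequentially"
    using P_hat_uniform_deviation_summable[OF \<pi> S_sym S_pos \<rho>_lim n\<rho> \<open>0 < \<alpha>\<close> \<open>0 < \<delta>\<close>]
    by (intro AE_eventually_of_summable_pmf_law[where X = "\<lambda>n \<omega>. (Z n \<omega>, A n \<omega>)", OF M meas law])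
      (simp add: not_less)
  then show ?thesis
    by simp
qed

theorem theorem4:
  fixes k :: nat and \<pi> :: "nat \<Rightarrow> real" and S :: "nat \<Rightarrow> nat \<Rightarrow> real"
    and \<rho> :: "nat \<Rightarrow> real"
    and M :: "'w measure"
    and Z :: "nat \<Rightarrow> 'w \<Rightarrow> nat \<Rightarrow> nat"
    and A :: "nat \<Rightarrow> 'w \<Rightarrow> nat \<Rightarrow> nat \<Rightarrow> bool"
  assumes k2: "k \<ge> 2"
    and pi_pos: "\<forall>a<k. \<pi> a > 0"
    and pi_sum: "(\<Sum>a<k. \<pi> a) = 1"
    and S_sym: "\<forall>a<k. \<forall>b<k. S a b = S b a"
    and S_pos: "\<forall>a<k. \<forall>b<k. S a b > 0"
    and S_cols: "\<forall>a<k. \<forall>b<k. a \<noteq> b \<longrightarrow> (\<exists>c<k. S c a \<noteq> S c b)"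
    and rho_lim: "\<rho> \<longlonglongrightarrow> 0"
    and nrho: "filterlim (\<lambda>n. real n * \<rho> n) at_top sequentially"
    and M_prob: "prob_space M"
    and meas: "\<forall>n. (\<lambda>\<omega>. (Z n \<omega>, A n \<omega>)) \<in> M \<rightarrow>\<^sub>M count_space UNIV"
    and law: "\<forall>n. distr M (count_space UNIV) (\<lambda>\<omega>. (Z n \<omega>, A n \<omega>))
                  = measure_pmf (sbm_pmf k \<pi> S \<rho> n)"
  shows
    "(\<forall>\<delta>>0. (\<lambda>n. measure M {\<omega> \<in> space M. \<forall>a<k. \<forall>b<k.
          \<bar>P_hat n (A n \<omega>) (Z n \<omega>) a b - \<rho> n * S a b\<bar>
            < sqrt (\<delta> * \<rho> n * ln (real n)) / real n}) \<longlonglongrightarrow> 1)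
     \<and> (\<forall>\<alpha>>0. \<forall>\<delta>>0. \<delta> < s_min k S / 2 \<longrightarrow>
          (AE \<omega> in M. \<forall>\<^sub>F n in sequentially.
             real n * \<rho> n > 4 * s_max k S / (\<alpha>\<^sup>2 * \<delta>\<^sup>2) \<longrightarrow>
             (\<forall>a<k. \<forall>b<k. \<forall>e\<in>F_set k n \<alpha>.
                \<bar>P_hat n (A n \<omega>) e a b
                   - P_R k n (\<lambda>c d. \<rho> n * S c d) (confusion n e (Z n \<omega>)) a b\<bar>
                  < \<delta> * \<rho> n)))"
proof -
  have \<pi>: "\<forall>a<k. 0 < \<pi> a" "(\<Sum>a<k. \<pi> a) = 1"
    using pi_pos pi_sum by simp_all
  note sbm = \<pi> S_sym S_pos rho_lim nrho
  have meas_n: "\<And>n. (\<lambda>\<omega>. (Z n \<omega>, A n \<omega>)) \<in> M \<rightarrow>\<^sub>M count_space UNIV"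
    and law_n: "\<And>n. distr M (count_space UNIV) (\<lambda>\<omega>. (Z n \<omega>, A n \<omega>)) = measure_pmf (sbm_pmf k \<pi> S \<rho> n)"
    using meas law by simp_all
  show ?thesis
    apply (intro conjI allI impI)
    subgoal for \<delta>
      using P_hat_true_labels_consistent[OF sbm meas_n law_n, of \<delta>] .
    subgoal premises positive for \<alpha> \<delta>
      using P_hat_uniformly_consistent[OF sbm M_prob meas_n law_n positive(1,2)]
      by (elim eventually_mono) (auto elim: eventually_mono)
    done
qed

end
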